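(* Let $q$ be a prime power and $GF(q)$ the finite field with $q$ elements. For every integer $n\ge 1$, the number of $n\times n$ upper-triangular matrices $X$ with entries in $GF(q)$ satisfying $X^2=0$ equals $C_n(q)$, where for $n\ge 0$ $$C_{2n}(q)=\sum_{j\in\mathbb{Z}}\left[\binom{2n}{n-3j}-\binom{2n}{n-3j-1}\right] q^{\,n^2-3j^2-j},$$ $$C_{2n+1}(q)=\sum_{j\in\mathbb{Z}}\left[\binom{2n+1}{n-3j}-\binom{2n+1}{n-3j-1}\right] q^{\,n^2+n-3j^2-2j}.$$
   Context: Ordinary binomial coefficients $\binom{N}{k}$ are taken to be $0$ when $k<0$ or $k>N$, so each sum over $j\in\mathbb{Z}$ has finitely many nonzero terms. *)

theory Defs
  imports Complex_Main
begin

definition binomZ :: "nat \<Rightarrow> int \<Rightarrow> int" where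
  "binomZ N k = (if 0 \<le> k \<and> k \<le> int N then int (N choose nat k) else 0)"

definition sumZ :: "(int \<Rightarrow> real) \<Rightarrow> real" where
  "sumZ f = (\<Sum>j\<in>{j. f j \<noteq> 0}. f j)"

definition C_even :: "nat \<Rightarrow> real \<Rightarrow> real" where
  "C_even n q = sumZ (\<lambda>j. real_of_int (binomZ (2*n) (int n - 3*j) - binomZ (2*n) (int n - 3*j - 1))
                          * q powi (int n ^ 2 - 3 * j ^ 2 - j))"

definition C_odd :: "nat \<Rightarrow> real \<Rightarrow> real" where
  "C_odd n q = sumZ (\<lambda>j. real_of_int (binomZ (2*n+1) (int n - 3*j) - binomZ (2*n+1) (int n - 3*j - 1))
                          * q powi (int n ^ 2 + int n - 3 * j ^ 2 - 2 * j))"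

definition C :: "nat \<Rightarrow> real \<Rightarrow> real" where
  "C m q = (if even m then C_even (m div 2) q else C_odd (m div 2) q)"

text \<open>n x n matrices over 'a, represented as functions on indices 0..n-1, zero outside.\<close>
definition upper_sq_zero :: "nat \<Rightarrow> (nat \<Rightarrow> nat \<Rightarrow> 'a::field) set" where
  "upper_sq_zero n = {X. (\<forall>i j. (n \<le> i \<or> n \<le> j) \<longrightarrow> X i j = 0)
                       \<and> (\<forall>i<n. \<forall>j<n. j < i \<longrightarrow> X i j = 0)
                       \<and> (\<forall>i<n. \<forall>j<n. (\<Sum>k<n. X i k * X k j) = 0)}"

end

theory Submission
  imports Defs "HOL-Library.FuncSet"
begin

(*
  Write U_m for the m x m upper-triangular matrices X with X^2 = 0 over a field with q
  elements. Bordering Y in U_m by a last column u gives a matrix in U_(m+1) iff u lies in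
  ker Y, and every matrix of U_(m+1) arises in exactly one way. The kernel of the bordered
  matrix has q |ker Y| elements if u lies in the column space of Y (which sits inside ker Y
  and has q^m / |ker Y| elements) and |ker Y| elements otherwise.

  For the polynomials v_k = weight_poly q k given by v_0 = v_1 = 1 and
  v_(k+2)(t) = v_(k+1)(qt) - t v_k(qt), this makes the weighted counts
    W_m(k) = weighted_kernel_count q m k U_m = sum over Y in U_m of |ker Y|^k v_k(q^m / |ker Y|^2)
  satisfy W_(m+1)(k) = W_m(k+1) + q^(m+k) W_m(k-1), with W_m(-1) read as 0, and
  W_0(k) = v_k(1) = sign6(k+1) q^(k(k-1)/6). The theta-like sums Cgen q m k, built from
  the numbers walk_count m d of +-1 walks of length m ending at d, obey the same recursion
  and initial values. Hence |U_m| = W_m(0) = Cgen q m 0, and expressing walk_count by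
  binomial coefficients turns Cgen q m 0 into C_m(q).
*)

section \<open>Finitely supported sums over the integers\<close>

lemma sumZ_eq_sum:
  assumes "finite S" "\<And>j. f j \<noteq> 0 \<Longrightarrow> j \<in> S"
  shows "sumZ f = (\<Sum>j\<in>S. f j)"
  unfolding sumZ_def by (rule sum.mono_neutral_left) (use assms in auto)

lemma sumZ_add:
  assumes "finite {j. f j \<noteq> 0}" "finite {j. g j \<noteq> 0}"
  shows "sumZ (\<lambda>j. f j + g j) = sumZ f + sumZ g"
proof -
  let ?S = "{j. f j \<noteq> 0} \<union> {j. g j \<noteq> 0}"
  have "sumZ (\<lambda>j. f j + g j) = (\<Sum>j\<in>?S. f j + g j)"
    and "sumZ f = (\<Sum>j\<in>?S. f j)" and "sumZ g = (\<Sum>j\<in>?S. g j)"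
    by (rule sumZ_eq_sum; use assms in auto)+
  then show ?thesis by (simp add: sum.distrib)
qed

lemma sumZ_cmult: "sumZ (\<lambda>j. c * f j) = c * sumZ f"
  unfolding sumZ_def by (cases "c = 0") (simp_all add: sum_distrib_left)

lemma sumZ_reindex_bij:
  assumes "bij h"
  shows "sumZ (\<lambda>j. f (h j)) = sumZ f"
  unfolding sumZ_def
proof (rule sum.reindex_bij_betw)
  show "bij_betw h {j. f (h j) \<noteq> 0} {j. f j \<noteq> 0}"
    using assms unfolding bij_def bij_betw_def by (auto intro: inj_on_subset)
qed

lemma sumZ_split_injections:
  fixes f :: "int \<Rightarrow> real"
  assumes fin: "finite {u. f u \<noteq> 0}" and inj: "inj a" "inj b"
    and disj: "range a \<inter> range b = {}"
    and supp: "\<And>u. f u \<noteq> 0 \<Longrightarrow> u \<in> range a \<union> range b"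
  shows "sumZ f = sumZ (\<lambda>j. f (a j) + f (b j))"
proof -
  define J where "J = a -` {u. f u \<noteq> 0} \<union> b -` {u. f u \<noteq> 0}"
  have "finite J"
    unfolding J_def using fin inj by (intro finite_UnI finite_vimageI)
  have "sumZ f = (\<Sum>u\<in>a ` J \<union> b ` J. f u)"
    by (rule sumZ_eq_sum) (use \<open>finite J\<close> supp in \<open>auto simp: J_def\<close>)
  also have "\<dots> = (\<Sum>u\<in>a ` J. f u) + (\<Sum>u\<in>b ` J. f u)"
    by (rule sum.union_disjoint) (use \<open>finite J\<close> disj in auto)
  also have "\<dots> = (\<Sum>j\<in>J. f (a j) + f (b j))"
    using inj by (simp add: sum.reindex inj_on_subset sum.distrib)
  also have "\<dots> = sumZ (\<lambda>j. f (a j) + f (b j))"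
    by (rule sumZ_eq_sum[symmetric]) (use \<open>finite J\<close> in \<open>auto simp: J_def\<close>)
  finally show ?thesis .
qed

section \<open>Walk counts, weight polynomials and the sums Cgen\<close>

fun walk_count :: "nat \<Rightarrow> int \<Rightarrow> real" where
  "walk_count 0 d = (if d = 0 then 1 else 0)"
| "walk_count (Suc m) d = walk_count m (d - 1) + walk_count m (d + 1)"

lemma walk_count_eq_0: "int m < \<bar>d\<bar> \<Longrightarrow> walk_count m d = 0"
  by (induction m arbitrary: d) auto

lemma walk_count_nonzero_bound: "walk_count m d \<noteq> 0 \<Longrightarrow> \<bar>d\<bar> \<le> int m"
  using walk_count_eq_0 not_le by blast

lemma walk_count_uminus: "walk_count m (- d) = walk_count m d"
proof (induction m arbitrary: d)
  case (Suc m)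
  then show ?case
    by (simp add: Suc.IH[of "d + 1", simplified] Suc.IH[of "d - 1", simplified] add.commute)
qed simp

lemma binomZ_Suc: "binomZ (Suc m) k = binomZ m k + binomZ m (k - 1)"
proof (cases "k \<le> 0")
  case True
  then show ?thesis by (cases "k = 0") (auto simp: binomZ_def)
next
  case False
  then have "nat k = Suc (nat (k - 1))" by simp
  with False show ?thesis by (auto simp: binomZ_def binomial_eq_0)
qed

lemma walk_count_eq_binomZ:
  "walk_count m d = (if even (int m - d) then real_of_int (binomZ m ((int m - d) div 2)) else 0)"
proof (induction m arbitrary: d)
  case 0
  show ?case by (auto simp: binomZ_def)
next
  case (Suc m)
  show ?case
  proof (cases "even (int m - d)")
    case True
    then show ?thesis by (simp add: Suc.IH)
  next
    case False
    then obtain k where "int m - d = 2 * k + 1" by (metis oddE)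
    then have "(int m - (d - 1)) div 2 = k + 1" "(int m - (d + 1)) div 2 = k"
      and "(1 + int m - d) div 2 = k + 1" by simp_all
    then show ?thesis by (simp add: Suc.IH binomZ_Suc)
  qed
qed

definition sign6 :: "int \<Rightarrow> real" where
  "sign6 u = (if u mod 6 \<in> {1, 2} then 1 else if u mod 6 \<in> {4, 5} then -1 else 0)"

lemma sign6_add_3: "sign6 (u + 3) = - sign6 u"
  unfolding sign6_def by (auto simp: mod_simps) presburger+

lemma sign6_uminus: "sign6 (- u) = - sign6 u"
  unfolding sign6_def by (auto simp: mod_simps) presburger+

fun weight_poly :: "real \<Rightarrow> nat \<Rightarrow> real \<Rightarrow> real" where
  "weight_poly q 0 t = 1"
| "weight_poly q (Suc 0) t = 1"
| "weight_poly q (Suc (Suc k)) t = weight_poly q (Suc k) (q * t) - t * weight_poly q k (q * t)"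

lemma weight_poly_Suc_Suc':
  assumes "q \<noteq> 0"
  shows "weight_poly q (Suc (Suc k)) t = weight_poly q (Suc k) t - q ^ k * t * weight_poly q k (t / q)"
proof (induction k arbitrary: t rule: less_induct)
  case (less k)
  consider "k = 0" | "k = 1" | j where "k = Suc (Suc j)"
    by (metis One_nat_def not0_implies_Suc)
  then show ?case
  proof cases
    case 3
    have IH: "weight_poly q (Suc k) (q * t)
        = weight_poly q k (q * t) - q ^ Suc j * (q * t) * weight_poly q (Suc j) t"
      "weight_poly q k (q * t)
        = weight_poly q (Suc j) (q * t) - q ^ j * (q * t) * weight_poly q j t"
      using less[of "Suc j" "q * t"] less[of j "q * t"] 3 assms by simp_all
    have "weight_poly q (Suc k) t = weight_poly q k (q * t) - t * weight_poly q (Suc j) (q * t)"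
      and "weight_poly q k (t / q) = weight_poly q (Suc j) t - t / q * weight_poly q j t"
      using 3 assms by simp_all
    then show ?thesis
      unfolding weight_poly.simps(3)[of q k] IH using 3 assms by (simp add: algebra_simps)
  qed (use assms in \<open>auto simp: algebra_simps\<close>)
qed

lemma weight_poly_transfer:
  assumes "q \<noteq> 0"
  shows "q ^ Suc k * t * weight_poly q (Suc k) (t / q) + (1 - t) * weight_poly q (Suc k) (q * t)
       = weight_poly q (Suc (Suc k)) t + q ^ Suc k * t * weight_poly q k t"
proof -
  have "weight_poly q (Suc k) (q * t) - weight_poly q k (q * t)
      = q ^ Suc k * (weight_poly q (Suc k) (t / q) - weight_poly q k t)"
  proof (cases k)
    case (Suc j)
    then show ?thesis
      using weight_poly_Suc_Suc'[OF assms, of j "q * t"] assms by (simp add: field_simps)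
  qed simp
  from arg_cong[OF this, of "(*) t"] show ?thesis by (simp add: algebra_simps)
qed

lemma weight_poly_at_1:
  assumes "q > 0"
  shows "weight_poly q k 1 = sign6 (int k + 1) * q powr (real k * (real k - 1) / 6)"
proof (induction k rule: less_induct)
  case (less k)
  consider "k = 0" | "k = 1" | "k = 2" | j where "k = Suc (Suc (Suc j))"
    by (metis One_nat_def Suc_1 not0_implies_Suc)
  then show ?case
  proof cases
    case 4
    have "weight_poly q k 1 = - (q ^ Suc j) * weight_poly q j 1"
      using weight_poly_Suc_Suc'[of q j q] assms 4 by simp
    also have "\<dots> = - sign6 (int j + 1) * (q powr real (Suc j) * q powr (real j * (real j - 1) / 6))"
      using less[of j] 4 assms by (simp add: powr_realpow del: of_nat_Suc)
    also have "\<dots> = sign6 (int k + 1) * q powr (real k * (real k - 1) / 6)"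
      using sign6_add_3[of "int j + 1"] 4
      by (simp add: powr_add[symmetric] field_simps add.commute)
    finally show ?thesis .
  qed (use assms in \<open>auto simp: sign6_def numeral_2_eq_2\<close>)
qed

definition Cgen_term :: "real \<Rightarrow> nat \<Rightarrow> int \<Rightarrow> int \<Rightarrow> real" where
  "Cgen_term q m k u =
     walk_count m (u - k - 1) * sign6 u * q powr ((3 * (real m + k)\<^sup>2 + 1 - (real_of_int u)\<^sup>2) / 12)"

definition Cgen :: "real \<Rightarrow> nat \<Rightarrow> int \<Rightarrow> real" where
  "Cgen q m k = sumZ (Cgen_term q m k)"

lemma finite_Cgen_term_support: "finite {u. Cgen_term q m k u \<noteq> 0}"
proof (rule finite_subset)
  show "{u. Cgen_term q m k u \<noteq> 0} \<subseteq> {k + 1 - int m .. k + 1 + int m}"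
    using walk_count_nonzero_bound[of m] by (fastforce simp: Cgen_term_def)
qed simp

lemma Cgen_Suc:
  assumes "q > 0"
  shows "Cgen q (Suc m) k = Cgen q m (k + 1) + q powr (real m + k) * Cgen q m (k - 1)"
proof -
  have "Cgen_term q (Suc m) k
      = (\<lambda>u. Cgen_term q m (k + 1) u + q powr (real m + k) * Cgen_term q m (k - 1) u)"
  proof
    fix u
    have "q powr ((3 * (real (Suc m) + k)\<^sup>2 + 1 - (real_of_int u)\<^sup>2) / 12)
        = q powr (real m + k) * q powr ((3 * (real m + of_int (k - 1))\<^sup>2 + 1 - (real_of_int u)\<^sup>2) / 12)"
      by (simp add: powr_add[symmetric] field_simps power2_eq_square)
    moreover have "(3 * (real (Suc m) + k)\<^sup>2 + 1 - (real_of_int u)\<^sup>2) / 12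
        = (3 * (real m + of_int (k + 1))\<^sup>2 + 1 - (real_of_int u)\<^sup>2) / 12"
      by (simp add: field_simps)
    ultimately show "Cgen_term q (Suc m) k u
        = Cgen_term q m (k + 1) u + q powr (real m + k) * Cgen_term q m (k - 1) u"
      unfolding Cgen_term_def by (simp add: algebra_simps diff_diff_eq)
  qed
  moreover have "finite {u. q powr (real m + k) * Cgen_term q m (k - 1) u \<noteq> 0}"
    by (rule finite_subset[OF _ finite_Cgen_term_support]) auto
  ultimately show ?thesis
    unfolding Cgen_def by (simp add: sumZ_add sumZ_cmult finite_Cgen_term_support)
qed

lemma Cgen_minus_1: "Cgen q m (- 1) = 0"
proof -
  have odd: "Cgen_term q m (- 1) (- u) = - Cgen_term q m (- 1) u" for u
    unfolding Cgen_term_def by (simp add: walk_count_uminus sign6_uminus)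
  have "Cgen q m (- 1) = sumZ (\<lambda>u. Cgen_term q m (- 1) (- u))"
    unfolding Cgen_def by (rule sumZ_reindex_bij[symmetric]) (simp add: bij_uminus)
  also have "\<dots> = - Cgen q m (- 1)"
    unfolding odd Cgen_def using sumZ_cmult[of "- 1"] by simp
  finally show ?thesis by simp
qed

lemma Cgen_0_eq_weight_poly_1:
  assumes "q > 0"
  shows "Cgen q 0 (int k) = weight_poly q k 1"
proof -
  have "Cgen q 0 (int k) = Cgen_term q 0 (int k) (int k + 1)"
    unfolding Cgen_def by (subst sumZ_eq_sum[of "{int k + 1}"]) (auto simp: Cgen_term_def split: if_splits)
  also have "\<dots> = sign6 (int k + 1) * q powr (real k * (real k - 1) / 6)"
  proof -
    have "q powr ((3 * (real k)\<^sup>2 + 1 - (real k + 1)\<^sup>2) / 12) = q powr (real k * (real k - 1) / 6)"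
      by (rule arg_cong[where f = "(powr) q"]) (simp add: field_simps power2_eq_square)
    then show ?thesis
      unfolding Cgen_term_def by simp
  qed
  finally show ?thesis
    using weight_poly_at_1[OF assms] by simp
qed

text \<open>Only u = 6 j + r and u = - 6 j - r contribute to Cgen q m 0: sign6 vanishes on multiples
  of 3, and walk_count m (u - 1) vanishes unless u - 1 has the parity of m.\<close>

lemma Cgen_eq_sumZ_binomZ:
  assumes r: "r \<in> {1, 2}" and m: "int m = 2 * int n + r - 1"
  shows "Cgen q m 0 = sumZ (\<lambda>j. real_of_int (binomZ m (int n - 3 * j) - binomZ m (int n - 3 * j - 1))
                                * q powr ((3 * (real m)\<^sup>2 + 1 - (real_of_int (6 * j + r))\<^sup>2) / 12))"
  unfolding Cgen_def
proof (subst sumZ_split_injections[where a = "\<lambda>j. 6 * j + r" and b = "\<lambda>j. - 6 * j - r"])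
  show "inj (\<lambda>j. 6 * j + r)" "inj (\<lambda>j. - 6 * j - r)"
    by (auto simp: inj_def)
  show "range (\<lambda>j. 6 * j + r) \<inter> range (\<lambda>j. - 6 * j - r) = {}"
    using r by auto presburger+
next
  fix u assume "Cgen_term q m 0 u \<noteq> 0"
  then have "even (int m - (u - 1))" and "u mod 6 \<in> {1, 2, 4, 5}"
    unfolding Cgen_term_def walk_count_eq_binomZ[of m] sign6_def by (auto split: if_splits)
  with r m have "(\<exists>j. u = 6 * j + r) \<or> (\<exists>j. u = - 6 * j - r)"
    by auto presburger+
  then show "u \<in> range (\<lambda>j. 6 * j + r) \<union> range (\<lambda>j. - 6 * j - r)"
    by (metis UnI1 UnI2 rangeI)
next
  have "Cgen_term q m 0 (6 * j + r) + Cgen_term q m 0 (- 6 * j - r)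
      = real_of_int (binomZ m (int n - 3 * j) - binomZ m (int n - 3 * j - 1))
        * q powr ((3 * (real m)\<^sup>2 + 1 - (real_of_int (6 * j + r))\<^sup>2) / 12)" for j
  proof -
    have "walk_count m (6 * j + r - 1) = binomZ m (int n - 3 * j)"
      using m by (simp add: walk_count_eq_binomZ)
    moreover have "walk_count m (- 6 * j - r - 1) = binomZ m (int n - 3 * j - 1)"
      using walk_count_uminus[of m "6 * j + r + 1"] m
      by (simp add: walk_count_eq_binomZ) (simp add: algebra_simps)
    moreover have "sign6 (6 * j + r) = 1" "sign6 (- 6 * j - r) = - 1"
      using r by (auto simp: sign6_def) presburger+
    moreover have "(real_of_int (- 6 * j - r))\<^sup>2 = (real_of_int (6 * j + r))\<^sup>2"
      by (simp add: power2_eq_square algebra_simps)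
    ultimately show ?thesis
      unfolding Cgen_term_def by (simp add: algebra_simps)
  qed
  then show "sumZ (\<lambda>j. Cgen_term q m 0 (6 * j + r) + Cgen_term q m 0 (- 6 * j - r))
      = sumZ (\<lambda>j. real_of_int (binomZ m (int n - 3 * j) - binomZ m (int n - 3 * j - 1))
                 * q powr ((3 * (real m)\<^sup>2 + 1 - (real_of_int (6 * j + r))\<^sup>2) / 12))"
    by simp
qed (rule finite_Cgen_term_support)

lemma powr_eq_powi: "q > 0 \<Longrightarrow> x = real_of_int z \<Longrightarrow> q powr x = q powi z"
  by (simp add: powr_real_of_int')

lemma Cgen_eq_C:
  assumes "q > 0"
  shows "Cgen q m 0 = C m q"
proof (cases "even m")
  case True
  then obtain n where n: "m = 2 * n" by blast
  have "q powr ((3 * (real m)\<^sup>2 + 1 - (real_of_int (6 * j + 1))\<^sup>2) / 12) = q powi (int n ^ 2 - 3 * j ^ 2 - j)"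
    for j
    by (rule powr_eq_powi[OF assms]) (simp add: n field_simps power2_eq_square)
  then show ?thesis
    using Cgen_eq_sumZ_binomZ[of 1 m n q] by (simp add: n C_def C_even_def)
next
  case False
  then obtain n where n: "m = 2 * n + 1" using oddE by blast
  have "q powr ((3 * (real m)\<^sup>2 + 1 - (real_of_int (6 * j + 2))\<^sup>2) / 12)
      = q powi (int n ^ 2 + int n - 3 * j ^ 2 - 2 * j)" for j
    by (rule powr_eq_powi[OF assms]) (simp add: n field_simps power2_eq_square)
  then show ?thesis
    using Cgen_eq_sumZ_binomZ[of 2 m n q] by (simp add: n C_def C_odd_def)
qed

section \<open>Kernels and ranges of matrices\<close>

definition vectors :: "nat \<Rightarrow> (nat \<Rightarrow> 'a::zero) set" where
  "vectors m = {u. \<forall>i\<ge>m. u i = 0}"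

definition mat_vec :: "nat \<Rightarrow> (nat \<Rightarrow> nat \<Rightarrow> 'a::semiring_0) \<Rightarrow> (nat \<Rightarrow> 'a) \<Rightarrow> nat \<Rightarrow> 'a" where
  "mat_vec m Y u = (\<lambda>i. if i < m then \<Sum>k<m. Y i k * u k else 0)"

definition mat_ker :: "nat \<Rightarrow> (nat \<Rightarrow> nat \<Rightarrow> 'a::semiring_0) \<Rightarrow> (nat \<Rightarrow> 'a) set" where
  "mat_ker m Y = {u \<in> vectors m. mat_vec m Y u = (\<lambda>_. 0)}"

definition mat_range :: "nat \<Rightarrow> (nat \<Rightarrow> nat \<Rightarrow> 'a::semiring_0) \<Rightarrow> (nat \<Rightarrow> 'a) set" where
  "mat_range m Y = mat_vec m Y ` vectors m"

definition border :: "nat \<Rightarrow> (nat \<Rightarrow> nat \<Rightarrow> 'a::zero) \<Rightarrow> (nat \<Rightarrow> 'a) \<Rightarrow> nat \<Rightarrow> nat \<Rightarrow> 'a" where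
  "border m Y u = (\<lambda>i j. if i < m \<and> j < m then Y i j else if i < m \<and> j = m then u i else 0)"

lemma bij_betw_vectors_PiE:
  "bij_betw (\<lambda>u. restrict u {..<m}) (vectors m) (PiE {..<m} (\<lambda>_. UNIV))"
  by (rule bij_betw_byWitness[where f' = "\<lambda>f i. if i < m then f i else 0"])
     (auto simp: vectors_def fun_eq_iff PiE_def extensional_def)

lemma finite_vectors: "finite (vectors m :: (nat \<Rightarrow> 'a::{finite,zero}) set)"
  by (rule bij_betw_finite[OF bij_betw_vectors_PiE, THEN iffD2]) (simp add: finite_PiE)

lemma card_vectors: "card (vectors m :: (nat \<Rightarrow> 'a::{finite,zero}) set) = card (UNIV :: 'a set) ^ m"
  using bij_betw_same_card[OF bij_betw_vectors_PiE] by (simp add: card_PiE)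

lemma finite_mat_ker: "finite (mat_ker m (Y :: nat \<Rightarrow> nat \<Rightarrow> 'a::{finite,semiring_0}))"
  unfolding mat_ker_def by (simp add: finite_vectors)

lemma mat_ker_0: "mat_ker 0 Y = {\<lambda>i. 0}"
  unfolding mat_ker_def vectors_def mat_vec_def by auto

lemma card_mat_ker_pos: "card (mat_ker m (Y :: nat \<Rightarrow> nat \<Rightarrow> 'a::{finite,semiring_0})) > 0"
proof -
  have "(\<lambda>_. 0) \<in> mat_ker m Y"
    unfolding mat_ker_def vectors_def mat_vec_def by (simp add: fun_eq_iff)
  then show ?thesis
    using finite_mat_ker card_gt_0_iff by blast
qed

lemma mat_vec_in_vectors: "mat_vec m Y u \<in> vectors m"
  unfolding mat_vec_def vectors_def by simp

lemma mat_vec_cong: "(\<And>k. k < m \<Longrightarrow> u k = v k) \<Longrightarrow> mat_vec m Y u = mat_vec m Y v"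
  unfolding mat_vec_def by (auto intro!: sum.cong)

lemma mat_vec_add: "mat_vec m Y (\<lambda>i. u i + v i) = (\<lambda>i. mat_vec m Y u i + mat_vec m Y v i)"
  unfolding mat_vec_def by (auto simp: sum.distrib distrib_left)

lemma mat_vec_diff:
  fixes Y :: "nat \<Rightarrow> nat \<Rightarrow> 'a::ring"
  shows "mat_vec m Y (\<lambda>i. u i - v i) = (\<lambda>i. mat_vec m Y u i - mat_vec m Y v i)"
  unfolding mat_vec_def by (auto simp: sum_subtractf right_diff_distrib)

lemma mat_vec_scale:
  fixes Y :: "nat \<Rightarrow> nat \<Rightarrow> 'a::comm_semiring_0"
  shows "mat_vec m Y (\<lambda>i. c * u i) = (\<lambda>i. c * mat_vec m Y u i)"
  unfolding mat_vec_def by (auto simp: sum_distrib_left mult.left_commute)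

lemma card_mat_vec_fibre:
  fixes Y :: "nat \<Rightarrow> nat \<Rightarrow> 'a::ring"
  assumes "c \<in> mat_range m Y"
  shows "card {u \<in> vectors m. mat_vec m Y u = c} = card (mat_ker m Y)"
proof -
  obtain u0 where u0: "u0 \<in> vectors m" "c = mat_vec m Y u0"
    using assms unfolding mat_range_def by blast
  have "bij_betw (\<lambda>w i. w i + u0 i) (mat_ker m Y) {u \<in> vectors m. mat_vec m Y u = c}"
    by (rule bij_betw_byWitness[where f' = "\<lambda>w i. w i - u0 i"])
       (use u0 in \<open>auto simp: mat_ker_def mat_vec_add mat_vec_diff vectors_def\<close>)
  then show ?thesis
    by (simp add: bij_betw_same_card)
qed

lemma card_mat_range_mult_card_mat_ker:
  fixes Y :: "nat \<Rightarrow> nat \<Rightarrow> 'a::{finite,ring}"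
  shows "card (mat_range m Y) * card (mat_ker m Y) = card (UNIV :: 'a set) ^ m"
proof -
  have "card (UNIV :: 'a set) ^ m = card (vectors m :: (nat \<Rightarrow> 'a) set)"
    by (rule card_vectors[symmetric])
  also have "\<dots> = (\<Sum>c\<in>mat_range m Y. card {u \<in> vectors m. mat_vec m Y u = c})"
    unfolding mat_range_def card_eq_sum by (rule sum.image_gen[OF finite_vectors])
  also have "\<dots> = card (mat_range m Y) * card (mat_ker m Y)"
    by (simp add: card_mat_vec_fibre)
  finally show ?thesis ..
qed

lemma mat_range_subset_mat_ker:
  fixes Y :: "nat \<Rightarrow> nat \<Rightarrow> 'a::semiring_0"
  assumes "\<And>i j. i < m \<Longrightarrow> j < m \<Longrightarrow> (\<Sum>k<m. Y i k * Y k j) = 0"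
  shows "mat_range m Y \<subseteq> mat_ker m Y"
proof
  fix c assume "c \<in> mat_range m Y"
  then obtain w where c: "c = mat_vec m Y w"
    unfolding mat_range_def by blast
  have "(\<Sum>k<m. Y i k * c k) = 0" if "i < m" for i
  proof -
    have "(\<Sum>k<m. Y i k * c k) = (\<Sum>k<m. \<Sum>l<m. Y i k * Y k l * w l)"
      unfolding c mat_vec_def by (simp add: sum_distrib_left mult.assoc)
    also have "\<dots> = (\<Sum>l<m. (\<Sum>k<m. Y i k * Y k l) * w l)"
      by (subst sum.swap) (simp add: sum_distrib_right)
    finally show ?thesis
      using assms that by simp
  qed
  then show "c \<in> mat_ker m Y"
    unfolding mat_ker_def using c mat_vec_in_vectors by (auto simp: mat_vec_def)
qed

section \<open>Bordering square-zero upper-triangular matrices\<close>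

lemma border_in_upper_sq_zero_iff:
  fixes Y :: "nat \<Rightarrow> nat \<Rightarrow> 'a::field"
  assumes Y: "\<And>i j. m \<le> i \<or> m \<le> j \<Longrightarrow> Y i j = 0" and u: "u \<in> vectors m"
  shows "border m Y u \<in> upper_sq_zero (Suc m) \<longleftrightarrow> Y \<in> upper_sq_zero m \<and> u \<in> mat_ker m Y"
proof -
  have sq: "(\<Sum>k<Suc m. border m Y u i k * border m Y u k j)
      = (if i < m \<and> j < m then \<Sum>k<m. Y i k * Y k j
         else if i < m \<and> j = m then \<Sum>k<m. Y i k * u k else 0)" for i j
    by (auto simp: border_def intro!: sum.cong)
  show ?thesis
    using Y u
    unfolding upper_sq_zero_def mat_ker_def mat_vec_def sq
    by (auto simp: border_def fun_eq_iff less_Suc_eq)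
qed

definition leading_block :: "nat \<Rightarrow> (nat \<Rightarrow> nat \<Rightarrow> 'a::zero) \<Rightarrow> nat \<Rightarrow> nat \<Rightarrow> 'a" where
  "leading_block m X = (\<lambda>i j. if i < m \<and> j < m then X i j else 0)"

definition last_column :: "nat \<Rightarrow> (nat \<Rightarrow> nat \<Rightarrow> 'a::zero) \<Rightarrow> nat \<Rightarrow> 'a" where
  "last_column m X = (\<lambda>i. if i < m then X i m else 0)"

lemma upper_sq_zero_Suc_eq_border:
  fixes X :: "nat \<Rightarrow> nat \<Rightarrow> 'a::field"
  assumes X: "X \<in> upper_sq_zero (Suc m)"
  shows "border m (leading_block m X) (last_column m X) = X"
proof -
  have lower: "\<And>j. j < m \<Longrightarrow> X m j = 0" and outside: "\<And>i j. Suc m \<le> i \<or> Suc m \<le> j \<Longrightarrow> X i j = 0"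
    using X unfolding upper_sq_zero_def by auto
  have "X m m * X m m = (\<Sum>k<Suc m. X m k * X k m)"
    using lower by simp
  also have "\<dots> = 0"
    using X unfolding upper_sq_zero_def by blast
  finally have "X m m = 0" by simp
  show ?thesis
  proof (intro ext)
    fix i j
    consider "i < m \<and> j \<le> m" | "i = m \<and> j < m" | "i = m \<and> j = m" | "Suc m \<le> i \<or> Suc m \<le> j"
      by linarith
    then show "border m (leading_block m X) (last_column m X) i j = X i j"
      using lower outside \<open>X m m = 0\<close>
      by cases (auto simp: border_def leading_block_def last_column_def)
  qed
qed

lemma bij_betw_border_upper_sq_zero:
  "bij_betw (\<lambda>(Y, u). border m Y u) (SIGMA Y:upper_sq_zero m. mat_ker m Y)
     (upper_sq_zero (Suc m) :: (nat \<Rightarrow> nat \<Rightarrow> 'a::field) set)"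
proof (rule bij_betw_byWitness[where f' = "\<lambda>X. (leading_block m X, last_column m X)"], goal_cases)
  case 1
  show ?case
    by (auto simp: upper_sq_zero_def mat_ker_def vectors_def border_def leading_block_def
        last_column_def fun_eq_iff)
next
  case 2
  show ?case
    using upper_sq_zero_Suc_eq_border by auto
next
  case 3
  show ?case
  proof clarify
    fix Y :: "nat \<Rightarrow> nat \<Rightarrow> 'a" and u assume Y: "Y \<in> upper_sq_zero m" and u: "u \<in> mat_ker m Y"
    have "\<And>i j. m \<le> i \<or> m \<le> j \<Longrightarrow> Y i j = 0" "u \<in> vectors m"
      using Y u unfolding upper_sq_zero_def mat_ker_def by blast+
    then show "border m Y u \<in> upper_sq_zero (Suc m)"
      using border_in_upper_sq_zero_iff Y u by blast
  qed
next
  case 4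
  show ?case
  proof clarify
    fix X :: "nat \<Rightarrow> nat \<Rightarrow> 'a" assume X: "X \<in> upper_sq_zero (Suc m)"
    have "\<And>i j. m \<le> i \<or> m \<le> j \<Longrightarrow> leading_block m X i j = 0"
      by (auto simp: leading_block_def)
    moreover have "last_column m X \<in> vectors m"
      by (simp add: last_column_def vectors_def)
    ultimately show "leading_block m X \<in> upper_sq_zero m \<and> last_column m X \<in> mat_ker m (leading_block m X)"
      using border_in_upper_sq_zero_iff upper_sq_zero_Suc_eq_border[OF X] X by metis
  qed
qed

lemma upper_sq_zero_0: "upper_sq_zero 0 = {\<lambda>i j. 0}"
  unfolding upper_sq_zero_def by auto

lemma finite_upper_sq_zero: "finite (upper_sq_zero m :: (nat \<Rightarrow> nat \<Rightarrow> 'a::{finite,field}) set)"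
proof (induction m)
  case 0
  show ?case
    by (simp add: upper_sq_zero_0)
next
  case (Suc m)
  have "finite (SIGMA Y:(upper_sq_zero m :: (nat \<Rightarrow> nat \<Rightarrow> 'a) set). mat_ker m Y)"
    using Suc finite_mat_ker by blast
  then show ?case
    using bij_betw_finite[OF bij_betw_border_upper_sq_zero] by blast
qed

lemma mat_vec_border:
  assumes "u \<in> vectors m"
  shows "mat_vec (Suc m) (border m Y u) w = (\<lambda>i. mat_vec m Y w i + u i * w m)"
  using assms by (auto simp: mat_vec_def border_def vectors_def fun_eq_iff intro!: sum.cong)

lemma mem_mat_ker_border_iff:
  fixes Y :: "nat \<Rightarrow> nat \<Rightarrow> 'a::comm_ring"
  assumes "u \<in> vectors m"
  shows "w \<in> mat_ker (Suc m) (border m Y u)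
    \<longleftrightarrow> w \<in> vectors (Suc m) \<and> mat_vec m Y w = (\<lambda>i. - (w m * u i))"
  by (auto simp: mat_ker_def mat_vec_border[OF assms] fun_eq_iff eq_neg_iff_add_eq_0 mult.commute)

lemma bij_betw_mat_ker_border:
  fixes Y :: "nat \<Rightarrow> nat \<Rightarrow> 'a::comm_ring"
  assumes u: "u \<in> vectors m"
  shows "bij_betw (\<lambda>w. (w m, \<lambda>i. if i < m then w i else 0)) (mat_ker (Suc m) (border m Y u))
     (SIGMA c:UNIV. {z \<in> vectors m. mat_vec m Y z = (\<lambda>i. - (c * u i))})"
proof (rule bij_betw_byWitness[where f' = "\<lambda>(c, z). z(m := c)"], goal_cases)
  case 1
  show ?case
    by (auto simp: mem_mat_ker_border_iff[OF u] vectors_def fun_eq_iff)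
next
  case 2
  show ?case
    by (auto simp: vectors_def fun_eq_iff)
next
  case 3
  have "mat_vec m Y (\<lambda>i. if i < m then w i else 0) = mat_vec m Y w" for w
    by (rule mat_vec_cong) simp
  then show ?case
    by (auto simp: mem_mat_ker_border_iff[OF u] vectors_def)
next
  case 4
  have "mat_vec m Y (z(m := c)) = mat_vec m Y z" for z c
    by (rule mat_vec_cong) simp
  then show ?case
    by (auto simp: mem_mat_ker_border_iff[OF u] vectors_def)
qed

lemma card_mat_ker_border:
  fixes Y :: "nat \<Rightarrow> nat \<Rightarrow> 'a::{finite,comm_ring}"
  assumes "u \<in> vectors m"
  shows "card (mat_ker (Suc m) (border m Y u))
    = (\<Sum>c\<in>UNIV. card {z \<in> vectors m. mat_vec m Y z = (\<lambda>i. - (c * u i))})"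
  using bij_betw_same_card[OF bij_betw_mat_ker_border[OF assms]]
  by (simp add: card_SigmaI finite_vectors)

lemma card_mat_ker_border_in_range:
  fixes Y :: "nat \<Rightarrow> nat \<Rightarrow> 'a::{finite,comm_ring}"
  assumes "u \<in> mat_range m Y"
  shows "card (mat_ker (Suc m) (border m Y u)) = card (UNIV :: 'a set) * card (mat_ker m Y)"
proof -
  obtain u0 where u0: "u0 \<in> vectors m" "u = mat_vec m Y u0"
    using assms unfolding mat_range_def by blast
  have "(\<lambda>i. - (c * u i)) = mat_vec m Y (\<lambda>i. - c * u0 i)" for c
    using mat_vec_scale[of m Y "- c" u0] u0(2) by simp
  then have "(\<lambda>i. - (c * u i)) \<in> mat_range m Y" for c
    using u0(1) unfolding mat_range_def vectors_def by auto
  moreover have "u \<in> vectors m"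
    using u0(2) mat_vec_in_vectors by simp
  ultimately show ?thesis
    by (simp add: card_mat_ker_border card_mat_vec_fibre)
qed

lemma card_mat_ker_border_notin_range:
  fixes Y :: "nat \<Rightarrow> nat \<Rightarrow> 'a::{finite,field}"
  assumes u: "u \<in> vectors m" "u \<notin> mat_range m Y"
  shows "card (mat_ker (Suc m) (border m Y u)) = card (mat_ker m Y)"
proof -
  have empty: "{z \<in> vectors m. mat_vec m Y z = (\<lambda>i. - (c * u i))} = {}" if "c \<noteq> 0" for c
  proof -
    have "mat_vec m Y (\<lambda>i. - inverse c * z i) = u" if "mat_vec m Y z = (\<lambda>i. - (c * u i))" for z
      using mat_vec_scale[of m Y "- inverse c" z] that \<open>c \<noteq> 0\<close> by (simp add: fun_eq_iff)
    then show ?thesis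
      using u unfolding mat_range_def vectors_def by force
  qed
  have "card (mat_ker (Suc m) (border m Y u))
      = (\<Sum>c\<in>{0}. card {z \<in> vectors m. mat_vec m Y z = (\<lambda>i. - (c * u i))})"
    unfolding card_mat_ker_border[OF u(1)] by (rule sum.mono_neutral_right) (auto simp: empty)
  then show ?thesis
    by (simp add: mat_ker_def)
qed

section \<open>Weighted kernel counts\<close>

lemma sum_mat_ker_border:
  fixes Y :: "nat \<Rightarrow> nat \<Rightarrow> 'a::{finite,field}" and g :: "nat \<Rightarrow> real"
  assumes sub: "mat_range m Y \<subseteq> mat_ker m Y"
  shows "(\<Sum>u\<in>mat_ker m Y. g (card (mat_ker (Suc m) (border m Y u))))
    = real (card (mat_range m Y)) * g (card (UNIV :: 'a set) * card (mat_ker m Y))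
      + (real (card (mat_ker m Y)) - real (card (mat_range m Y))) * g (card (mat_ker m Y))"
proof -
  have "(\<Sum>u\<in>mat_ker m Y. g (card (mat_ker (Suc m) (border m Y u))))
      = (\<Sum>u\<in>mat_ker m Y - mat_range m Y. g (card (mat_ker (Suc m) (border m Y u))))
        + (\<Sum>u\<in>mat_range m Y. g (card (mat_ker (Suc m) (border m Y u))))"
    by (rule sum.subset_diff[OF sub finite_mat_ker])
  also have "\<dots> = real (card (mat_ker m Y - mat_range m Y)) * g (card (mat_ker m Y))
      + real (card (mat_range m Y)) * g (card (UNIV :: 'a set) * card (mat_ker m Y))"
  proof -
    have "u \<in> vectors m" if "u \<in> mat_ker m Y" for u
      using that by (simp add: mat_ker_def)
    then show ?thesis
      by (simp add: card_mat_ker_border_in_range card_mat_ker_border_notin_range)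
  qed
  also have "real (card (mat_ker m Y - mat_range m Y)) = real (card (mat_ker m Y)) - real (card (mat_range m Y))"
    using card_Diff_subset[OF finite_subset[OF sub finite_mat_ker] sub] card_mono[OF finite_mat_ker sub]
    by (simp add: of_nat_diff)
  finally show ?thesis
    by simp
qed

lemma sum_upper_sq_zero_Suc:
  fixes g :: "nat \<Rightarrow> real"
  shows "(\<Sum>X\<in>(upper_sq_zero (Suc m) :: (nat \<Rightarrow> nat \<Rightarrow> 'a::{finite,field}) set).
            g (card (mat_ker (Suc m) X)))
    = (\<Sum>Y\<in>(upper_sq_zero m :: (nat \<Rightarrow> nat \<Rightarrow> 'a) set).
         real (card (mat_range m Y)) * g (card (UNIV :: 'a set) * card (mat_ker m Y))
         + (real (card (mat_ker m Y)) - real (card (mat_range m Y))) * g (card (mat_ker m Y)))"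
proof -
  have "(\<Sum>X\<in>(upper_sq_zero (Suc m) :: (nat \<Rightarrow> nat \<Rightarrow> 'a) set). g (card (mat_ker (Suc m) X)))
      = (\<Sum>(Y, u)\<in>(SIGMA Y:(upper_sq_zero m :: (nat \<Rightarrow> nat \<Rightarrow> 'a) set). mat_ker m Y).
           g (card (mat_ker (Suc m) (border m Y u))))"
    using sum.reindex_bij_betw[OF bij_betw_border_upper_sq_zero[where 'a = 'a],
        of "\<lambda>X. g (card (mat_ker (Suc m) X))" m]
    by (simp add: case_prod_unfold)
  also have "\<dots> = (\<Sum>Y\<in>(upper_sq_zero m :: (nat \<Rightarrow> nat \<Rightarrow> 'a) set).
      \<Sum>u\<in>mat_ker m Y. g (card (mat_ker (Suc m) (border m Y u))))"
    by (rule sum.Sigma[symmetric]) (simp_all add: finite_upper_sq_zero finite_mat_ker)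
  finally show ?thesis
    by (simp add: sum_mat_ker_border mat_range_subset_mat_ker upper_sq_zero_def)
qed

lemma weight_poly_border_identity:
  fixes K R q :: real
  assumes K: "K > 0" and q: "q > 0" and RK: "R * K = q ^ m"
  shows "R * ((q * K) ^ Suc k * weight_poly q (Suc k) (q ^ Suc m / (q * K)\<^sup>2))
       + (K - R) * (K ^ Suc k * weight_poly q (Suc k) (q ^ Suc m / K\<^sup>2))
     = K ^ Suc (Suc k) * weight_poly q (Suc (Suc k)) (q ^ m / K\<^sup>2)
       + q ^ (Suc k + m) * (K ^ k * weight_poly q k (q ^ m / K\<^sup>2))"
proof -
  define t where "t = q ^ m / K\<^sup>2"
  have R: "R = t * K" and tK: "t * K\<^sup>2 = q ^ m"
    using RK K unfolding t_def by (simp_all add: field_simps power2_eq_square)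
  have "q ^ Suc m / (q * K)\<^sup>2 = t / q" "q ^ Suc m / K\<^sup>2 = q * t"
    unfolding t_def using q K by (simp_all add: field_simps power2_eq_square)
  then have "R * ((q * K) ^ Suc k * weight_poly q (Suc k) (q ^ Suc m / (q * K)\<^sup>2))
       + (K - R) * (K ^ Suc k * weight_poly q (Suc k) (q ^ Suc m / K\<^sup>2))
      = K ^ Suc (Suc k) * (q ^ Suc k * t * weight_poly q (Suc k) (t / q) + (1 - t) * weight_poly q (Suc k) (q * t))"
    unfolding R by (simp add: power_mult_distrib algebra_simps)
  also have "\<dots> = K ^ Suc (Suc k) * (weight_poly q (Suc (Suc k)) t + q ^ Suc k * t * weight_poly q k t)"
    using weight_poly_transfer[of q k t] q by simp
  also have "\<dots> = K ^ Suc (Suc k) * weight_poly q (Suc (Suc k)) t + q ^ Suc k * (t * K\<^sup>2) * (K ^ k * weight_poly q k t)"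
    by (simp add: algebra_simps power2_eq_square)
  finally show ?thesis
    unfolding tK t_def[symmetric] by (simp add: power_add)
qed

definition weighted_kernel_count :: "real \<Rightarrow> nat \<Rightarrow> nat \<Rightarrow> (nat \<Rightarrow> nat \<Rightarrow> 'a::semiring_0) set \<Rightarrow> real" where
  "weighted_kernel_count q m k S =
     (\<Sum>Y\<in>S. real (card (mat_ker m Y)) ^ k * weight_poly q k (q ^ m / (real (card (mat_ker m Y)))\<^sup>2))"

lemma weighted_kernel_count_Suc_0:
  "weighted_kernel_count q (Suc m) 0 (upper_sq_zero (Suc m) :: (nat \<Rightarrow> nat \<Rightarrow> 'a::{finite,field}) set)
   = weighted_kernel_count q m 1 (upper_sq_zero m :: (nat \<Rightarrow> nat \<Rightarrow> 'a) set)"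
  using sum_upper_sq_zero_Suc[where 'a = 'a, of "\<lambda>_. 1" m]
  by (simp add: weighted_kernel_count_def)

lemma weighted_kernel_count_Suc_Suc:
  fixes q :: real
  defines "q \<equiv> real (card (UNIV :: 'a::{finite,field} set))"
  shows "weighted_kernel_count q (Suc m) (Suc k) (upper_sq_zero (Suc m) :: (nat \<Rightarrow> nat \<Rightarrow> 'a) set)
    = weighted_kernel_count q m (Suc (Suc k)) (upper_sq_zero m :: (nat \<Rightarrow> nat \<Rightarrow> 'a) set)
      + q ^ (Suc k + m) * weighted_kernel_count q m k (upper_sq_zero m :: (nat \<Rightarrow> nat \<Rightarrow> 'a) set)"
proof -
  let ?K = "\<lambda>Y :: nat \<Rightarrow> nat \<Rightarrow> 'a. real (card (mat_ker m Y))"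
  let ?R = "\<lambda>Y :: nat \<Rightarrow> nat \<Rightarrow> 'a. real (card (mat_range m Y))"
  have q: "q > 0"
    unfolding q_def by (simp add: card_gt_0_iff)
  have RK: "?R Y * ?K Y = q ^ m" for Y
    using card_mat_range_mult_card_mat_ker[of m Y] unfolding q_def by (metis of_nat_mult of_nat_power)
  have K: "?K Y > 0" for Y
    using card_mat_ker_pos[of m Y] by simp
  have "weighted_kernel_count q (Suc m) (Suc k) (upper_sq_zero (Suc m) :: (nat \<Rightarrow> nat \<Rightarrow> 'a) set)
      = (\<Sum>Y\<in>upper_sq_zero m. ?R Y * ((q * ?K Y) ^ Suc k * weight_poly q (Suc k) (q ^ Suc m / (q * ?K Y)\<^sup>2))
          + (?K Y - ?R Y) * (?K Y ^ Suc k * weight_poly q (Suc k) (q ^ Suc m / (?K Y)\<^sup>2)))"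
    using sum_upper_sq_zero_Suc[where 'a = 'a,
        of "\<lambda>n. real n ^ Suc k * weight_poly q (Suc k) (q ^ Suc m / (real n)\<^sup>2)" m]
    unfolding weighted_kernel_count_def q_def by simp
  also have "\<dots> = (\<Sum>Y\<in>upper_sq_zero m. ?K Y ^ Suc (Suc k) * weight_poly q (Suc (Suc k)) (q ^ m / (?K Y)\<^sup>2)
      + q ^ (Suc k + m) * (?K Y ^ k * weight_poly q k (q ^ m / (?K Y)\<^sup>2)))"
    by (intro sum.cong refl weight_poly_border_identity[OF K q RK])
  finally show ?thesis
    by (simp only: weighted_kernel_count_def sum.distrib sum_distrib_left)
qed

lemma weighted_kernel_count_eq_Cgen:
  fixes q :: real
  defines "q \<equiv> real (card (UNIV :: 'a::{finite,field} set))"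
  shows "weighted_kernel_count q m k (upper_sq_zero m :: (nat \<Rightarrow> nat \<Rightarrow> 'a) set) = Cgen q m (int k)"
proof -
  have q: "q > 0"
    unfolding q_def by (simp add: card_gt_0_iff)
  show ?thesis
  proof (induction m arbitrary: k)
    case 0
    show ?case
      using q by (simp add: weighted_kernel_count_def upper_sq_zero_0 mat_ker_0 Cgen_0_eq_weight_poly_1)
  next
    case (Suc m)
    show ?case
    proof (cases k)
      case 0
      then show ?thesis
        using Suc.IH[of 1] Cgen_Suc[OF q, of m 0] Cgen_minus_1[of q m]
        by (simp add: weighted_kernel_count_Suc_0)
    next
      case (Suc j)
      have "real m + real k = real (Suc j + m)"
        using Suc by simp
      then have "q powr (real m + real k) = q ^ (Suc j + m)"
        by (simp only: powr_realpow[OF q])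
      then show ?thesis
        using Suc.IH[of "Suc (Suc j)"] Suc.IH[of j] Cgen_Suc[OF q, of m "int k"] Suc
        by (simp add: weighted_kernel_count_Suc_Suc q_def add.commute)
    qed
  qed
qed

theorem mainTheorem1:
  fixes n :: nat
  assumes "n \<ge> 1"
  shows "real (card (upper_sq_zero n :: (nat \<Rightarrow> nat \<Rightarrow> 'a::{finite,field}) set))
         = C n (real (card (UNIV :: 'a set)))"
proof -
  let ?q = "real (card (UNIV :: 'a set))"
  have "real (card (upper_sq_zero n :: (nat \<Rightarrow> nat \<Rightarrow> 'a) set))
      = weighted_kernel_count ?q n 0 (upper_sq_zero n :: (nat \<Rightarrow> nat \<Rightarrow> 'a) set)"
    by (simp add: weighted_kernel_count_def)
  also have "\<dots> = Cgen ?q n 0"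
    using weighted_kernel_count_eq_Cgen[where 'a = 'a, of n 0] by simp
  also have "\<dots> = C n ?q"
    by (rule Cgen_eq_C) (simp add: card_gt_0_iff)
  finally show ?thesis .
qed

end
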